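(* For all integers $n\ge2$ and $1\le p\le n-1$, $$2|\mathbb{S}^n|\ >\ \Big|\mathbb{S}^p\big(\sqrt{p/n}\big)\times\mathbb{S}^{n-p}\big(\sqrt{(n-p)/n}\big)\Big|\ \ge\ \Big|\mathbb{S}^{\lfloor n/2\rfloor}\big(\sqrt{\lfloor n/2\rfloor/n}\big)\times\mathbb{S}^{\lceil n/2\rceil}\big(\sqrt{\lceil n/2\rceil/n}\big)\Big|.$$
   Context: $\mathbb{S}^d(R)$ denotes the round $d$-sphere of radius $R$, $\mathbb{S}^d=\mathbb{S}^d(1)$, and $|\cdot|$ denotes $n$-dimensional volume; $|\mathbb{S}^d|=2\pi^{(d+1)/2}/\Gamma(\tfrac{d+1}{2})$. *)

theory Defs
  imports "HOL-Analysis.Analysis"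
begin

definition unit_sphere_vol :: "nat \<Rightarrow> real" where
  "unit_sphere_vol d = 2 * pi powr (real (d + 1) / 2) / Gamma (real (d + 1) / 2)"

definition sphere_vol :: "nat \<Rightarrow> real \<Rightarrow> real" where
  "sphere_vol d R = unit_sphere_vol d * R ^ d"

definition sphere_prod_vol :: "nat \<Rightarrow> real \<Rightarrow> nat \<Rightarrow> real \<Rightarrow> real" where
  "sphere_prod_vol p r q s = sphere_vol p r * sphere_vol q s"

end

theory Submission
  imports Defs "HOL-Real_Asymp.Real_Asymp"
begin

text \<open>
  Write \<open>V(n,p)\<close> for the volume of the Clifford hypersurface
  \<open>\<bbbS>\<^sup>p(\<surd>(p/n)) \<times> \<bbbS>\<^sup>n\<^sup>-\<^sup>p(\<surd>((n-p)/n))\<close>, so that \<open>V(n,0) = 2|\<bbbS>\<^sup>n|\<close> and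
  \<open>V(n,p) = V(n,n-p)\<close>. From \<open>|\<bbbS>\<^sup>d\<^sup>+\<^sup>2| = 2\<pi>|\<bbbS>\<^sup>d|/(d+1)\<close> one gets
  \<open>V(n,p+2)\<^sup>2 g(n-p-2) = V(n,p)\<^sup>2 g(p)\<close> with \<open>g(k) = (k+2)\<^sup>k\<^sup>+\<^sup>2/(k\<^sup>k(k+1)\<^sup>2)\<close>,
  and \<open>g\<close> is nondecreasing with \<open>g(0) < g(1)\<close>. Hence \<open>V(n,p)\<close> decreases in steps of
  two as \<open>p\<close> moves towards \<open>n/2\<close>, strictly at the first step from \<open>p = 0\<close>.
  The two parities are linked at the ends: \<open>V(n,1) < 2|\<bbbS>\<^sup>n|\<close> follows from the
  log-convexity of \<open>\<Gamma>\<close>, and for \<open>n = 2m\<close> the inequality \<open>V(n,m) \<le> V(n,m-1)\<close> amounts to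
  \<open>\<phi>(m) \<ge> 0\<close> for an explicit function \<open>\<phi>\<close> built from \<open>ln \<Gamma>\<close>; this holds because
  \<open>\<phi>(M+2) \<le> \<phi>(M)\<close> while \<open>\<phi>(M) \<ge> -1/(M-1)\<close>.
\<close>

section \<open>Consequences of the log-convexity of \<open>\<Gamma>\<close>\<close>

lemma Gamma_plus1_real: "(y::real) > 0 \<Longrightarrow> Gamma (y + 1) = y * Gamma y"
  by (rule Gamma_plus1) (use nonpos_Ints_nonpos in fastforce)

lemma Gamma_midpoint_sq_le:
  fixes a b :: real
  assumes "a > 0" "b > 0"
  shows "Gamma ((a + b) / 2) ^ 2 \<le> Gamma a * Gamma b"
proof -
  have "(ln \<circ> Gamma) ((1 - 1/2) *\<^sub>R a + (1/2) *\<^sub>R b) \<le> (1 - 1/2) * (ln \<circ> Gamma) a + (1/2) * (ln \<circ> Gamma) b"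
    by (rule convex_onD[OF log_convex_Gamma_real]) (use assms in auto)
  then have "2 * ln (Gamma ((a + b) / 2)) \<le> ln (Gamma a) + ln (Gamma b)"
    by (simp add: add_divide_distrib)
  moreover have "Gamma a > 0" "Gamma b > 0" "Gamma ((a + b) / 2) > 0"
    using assms by simp_all
  ultimately have "ln (Gamma ((a + b) / 2) ^ 2) \<le> ln (Gamma a * Gamma b)"
    by (simp add: ln_mult ln_realpow)
  then show ?thesis
    using \<open>Gamma a > 0\<close> \<open>Gamma b > 0\<close> \<open>Gamma ((a + b) / 2) > 0\<close> by simp
qed

lemma Gamma_plus_half_sq_le:
  fixes y :: real
  assumes "y > 0"
  shows "Gamma (y + 1/2) ^ 2 \<le> y * Gamma y ^ 2"
  using Gamma_midpoint_sq_le[of y "y + 1"] assms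
  by (simp add: Gamma_plus1_real add_divide_distrib power2_eq_square mult_ac)

section \<open>Volumes of unit spheres\<close>

lemma unit_sphere_vol_pos: "unit_sphere_vol d > 0"
  unfolding unit_sphere_vol_def by simp

lemma unit_sphere_vol_0: "unit_sphere_vol 0 = 2"
  unfolding unit_sphere_vol_def by (simp add: powr_half_sqrt Gamma_one_half_real)

lemma unit_sphere_vol_1: "unit_sphere_vol 1 = 2 * pi"
  unfolding unit_sphere_vol_def by simp

lemma unit_sphere_vol_Suc:
  "unit_sphere_vol (Suc d) =
     sqrt pi * Gamma (real (d + 1) / 2) / Gamma (real (d + 2) / 2) * unit_sphere_vol d"
proof -
  define a b where "a = real (d + 1) / 2" and "b = real (d + 2) / 2"
  have Suc_d: "real (Suc d + 1) / 2 = b" by (simp add: b_def)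
  have "b = a + 1/2" by (simp add: a_def b_def field_simps)
  then have pi_b: "pi powr b = pi powr a * sqrt pi"
    by (simp add: powr_add powr_half_sqrt)
  have "Gamma a > 0" by (simp add: a_def)
  have "unit_sphere_vol (Suc d) = 2 * (pi powr a * sqrt pi) / Gamma b"
    unfolding unit_sphere_vol_def Suc_d pi_b ..
  also have "\<dots> = sqrt pi * Gamma a / Gamma b * (2 * pi powr a / Gamma a)"
    using \<open>Gamma a > 0\<close> by (simp add: field_simps)
  finally show ?thesis
    unfolding unit_sphere_vol_def a_def b_def .
qed

lemma unit_sphere_vol_Suc_Suc:
  "unit_sphere_vol (Suc (Suc d)) = 2 * pi * unit_sphere_vol d / real (d + 1)"
proof -
  define y where "y = real (d + 1) / 2"
  have y: "y > 0" by (simp add: y_def)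
  have "real (Suc (Suc d) + 1) / 2 = y + 1" by (simp add: y_def field_simps)
  then have "unit_sphere_vol (Suc (Suc d)) = 2 * pi powr (y + 1) / Gamma (y + 1)"
    unfolding unit_sphere_vol_def by (simp only:)
  also have "\<dots> = 2 * pi * (2 * pi powr y / Gamma y) / real (d + 1)"
  proof -
    have "real (d + 1) = 2 * y" "Gamma y > 0" using y by (simp_all add: y_def)
    then show ?thesis
      using y Gamma_plus1_real[OF y] by (simp add: powr_add field_simps)
  qed
  finally show ?thesis
    unfolding unit_sphere_vol_def y_def .
qed

lemma unit_sphere_vol_sq_le:
  "2 * pi * unit_sphere_vol d ^ 2 \<le> real (d + 1) * unit_sphere_vol (Suc d) ^ 2"
proof -
  define y where "y = real (d + 1) / 2"
  have y: "y > 0" by (simp add: y_def)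
  have "real (d + 2) / 2 = y + 1/2" by (simp add: y_def field_simps)
  note U = unit_sphere_vol_Suc[of d, unfolded this, folded y_def]
  have d: "real (d + 1) = 2 * y" by (simp add: y_def)
  have "Gamma (y + 1/2) > 0" using y by simp
  have "2 * pi * unit_sphere_vol d ^ 2 * Gamma (y + 1/2) ^ 2
          \<le> 2 * pi * unit_sphere_vol d ^ 2 * (y * Gamma y ^ 2)"
    by (rule mult_left_mono[OF Gamma_plus_half_sq_le[OF y]]) simp
  then show ?thesis
    unfolding U d using \<open>Gamma (y + 1/2) > 0\<close>
    by (simp add: field_simps power_mult_distrib power_divide)
qed

section \<open>The ratio of consecutive Clifford volumes\<close>

definition step_factor :: "nat \<Rightarrow> real" where
  "step_factor k = real (k + 2) ^ (k + 2) / (real k ^ k * real (k + 1) ^ 2)"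

lemma of_nat_self_power_pos: "real k ^ k > 0"
  by (cases k) simp_all

lemma step_factor_pos: "step_factor k > 0"
  using of_nat_self_power_pos[of k] unfolding step_factor_def by simp

lemma ln_lower_bound_rational:
  fixes y :: real
  assumes "1 \<le> y"
  shows "2 * (y - 1) / (y + 1) \<le> ln y"
proof -
  let ?f = "\<lambda>y::real. 2 * (y - 1) / (y + 1) - ln y"
  have "?f y \<le> ?f 1"
  proof (rule DERIV_nonpos_imp_nonincreasing[OF assms])
    fix x :: real
    assume x: "1 \<le> x" "x \<le> y"
    have "DERIV ?f x :> - ((x - 1)\<^sup>2 / (x * (x + 1)\<^sup>2))"
      using x
      apply -
      apply (rule derivative_eq_intros refl | simp)+
        apply (subgoal_tac "x + 1 > 0")
         apply (simp add: divide_simps power2_eq_square)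
        apply (simp add: algebra_simps)
       apply simp
      done
    then show "\<exists>d. DERIV ?f x :> d \<and> d \<le> 0"
      using x by force
  qed
  then show ?thesis by simp
qed

lemma ln_step_factor_mono:
  fixes s t :: real
  assumes "0 < s" "s \<le> t"
  shows "(s + 2) * ln (s + 2) - s * ln s - 2 * ln (s + 1) \<le> (t + 2) * ln (t + 2) - t * ln t - 2 * ln (t + 1)"
proof (rule DERIV_nonneg_imp_nondecreasing[OF assms(2)])
  fix x :: real
  assume x: "s \<le> x" "x \<le> t"
  then have "x > 0" using assms by simp
  then have "x \<noteq> 0" "x + 1 \<noteq> 0" "x + 2 \<noteq> 0" by simp_all
  with \<open>x > 0\<close> have deriv: "DERIV (\<lambda>x. (x + 2) * ln (x + 2) - x * ln x - 2 * ln (x + 1)) x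
                      :> ln (x + 2) - ln x - 2 / (x + 1)"
    by (auto intro!: derivative_eq_intros)
  have "2 * ((x + 2) / x - 1) / ((x + 2) / x + 1) \<le> ln ((x + 2) / x)"
    by (rule ln_lower_bound_rational) (use \<open>x > 0\<close> in \<open>simp add: field_simps\<close>)
  moreover have "2 * ((x + 2) / x - 1) / ((x + 2) / x + 1) = 2 / (x + 1)"
    using \<open>x > 0\<close> by (simp add: field_simps)
  ultimately have "0 \<le> ln (x + 2) - ln x - 2 / (x + 1)"
    using \<open>x > 0\<close> by (simp add: ln_div)
  with deriv show "\<exists>d. DERIV (\<lambda>x. (x + 2) * ln (x + 2) - x * ln x - 2 * ln (x + 1)) x :> d \<and> 0 \<le> d"
    by blast
qed

lemma step_factor_mono_pos:
  assumes "1 \<le> p" "p \<le> k"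
  shows "step_factor p \<le> step_factor k"
proof -
  have ln_sf: "ln (step_factor j) = (real j + 2) * ln (real j + 2) - real j * ln (real j) - 2 * ln (real j + 1)"
    if "1 \<le> j" for j
  proof -
    have pos: "real j ^ j > 0" "real (j + 1) ^ 2 > 0" "real (j + 2) ^ (j + 2) > 0"
      using that by simp_all
    have "ln (step_factor j) = ln (real (j + 2) ^ (j + 2)) - (ln (real j ^ j) + ln (real (j + 1) ^ 2))"
      unfolding step_factor_def using pos by (simp only: ln_divide_pos ln_mult_pos mult_pos_pos)
    also have "\<dots> = (real j + 2) * ln (real j + 2) - real j * ln (real j) - 2 * ln (real j + 1)"
      using that
      unfolding ln_realpow by (simp add: algebra_simps)
    finally show ?thesis .
  qed
  have "ln (step_factor p) \<le> ln (step_factor k)"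
    unfolding ln_sf[OF assms(1)] ln_sf[OF order.trans[OF assms]]
    by (rule ln_step_factor_mono) (use assms in auto)
  then show ?thesis
    using step_factor_pos by simp
qed

lemma step_factor_0_less:
  assumes "0 < k"
  shows "step_factor 0 < step_factor k"
proof -
  have "step_factor 0 < step_factor 1"
    by (simp add: step_factor_def)
  also have "step_factor 1 \<le> step_factor k"
    by (rule step_factor_mono_pos) (use assms in auto)
  finally show ?thesis .
qed

lemma step_factor_mono:
  assumes "p \<le> k"
  shows "step_factor p \<le> step_factor k"
  using assms step_factor_mono_pos[of p k] step_factor_0_less[of k]
  by (cases "p = 0"; cases "k = 0") auto

section \<open>A lower bound for a ratio of \<open>\<Gamma>\<close> values\<close>

lemma nonneg_if_deriv_nonpos_tendsto_0:
  fixes f f' :: "real \<Rightarrow> real" and a x :: real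
  assumes lim: "(f \<longlongrightarrow> 0) at_top"
    and deriv: "\<And>t. a < t \<Longrightarrow> (f has_real_derivative f' t) (at t)"
    and nonpos: "\<And>t. a < t \<Longrightarrow> f' t \<le> 0"
    and "a < x"
  shows "0 \<le> f x"
proof (rule tendsto_upperbound[OF lim])
  show "\<forall>\<^sub>F y in at_top. f y \<le> f x"
    using eventually_ge_at_top[of x]
  proof eventually_elim
    case (elim y)
    show "f y \<le> f x"
    proof (rule DERIV_nonpos_imp_nonincreasing[OF elim])
      fix t
      assume "x \<le> t"
      then have "a < t" using \<open>a < x\<close> by simp
      then show "\<exists>d. (f has_real_derivative d) (at t) \<and> d \<le> 0"
        using deriv nonpos by blast
    qed
  qed
qed simp

definition log_Gamma_gap :: "real \<Rightarrow> real" where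
  "log_Gamma_gap M = 2 * ln (Gamma ((M + 1) / 2)) - 2 * ln (Gamma (M / 2))"

lemma log_Gamma_gap_add_two:
  fixes M :: real
  assumes "M > 0"
  shows "log_Gamma_gap (M + 2) = log_Gamma_gap M + 2 * ln (M + 1) - 2 * ln M"
proof -
  have e: "(M + 2 + 1) / 2 = (M + 1) / 2 + 1" "(M + 2) / 2 = M / 2 + 1"
    by (simp_all add: field_simps)
  have G1: "Gamma ((M + 2 + 1) / 2) = (M + 1) / 2 * Gamma ((M + 1) / 2)"
    unfolding e by (rule Gamma_plus1_real) (use assms in simp)
  have G2: "Gamma ((M + 2) / 2) = M / 2 * Gamma (M / 2)"
    unfolding e by (rule Gamma_plus1_real) (use assms in simp)
  have "ln (Gamma ((M + 2 + 1) / 2)) = ln (M + 1) - ln 2 + ln (Gamma ((M + 1) / 2))"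
    unfolding G1 using assms by (simp add: ln_mult_pos ln_divide_pos)
  moreover have "ln (Gamma ((M + 2) / 2)) = ln M - ln 2 + ln (Gamma (M / 2))"
    unfolding G2 using assms by (simp add: ln_mult_pos ln_divide_pos)
  ultimately show ?thesis
    unfolding log_Gamma_gap_def by simp
qed

lemma log_Gamma_gap_ge:
  fixes M :: real
  assumes "M > 1"
  shows "ln ((M - 1) / 2) \<le> log_Gamma_gap M"
proof -
  define y where "y = (M - 1) / 2"
  have y: "y > 0" using assms by (simp add: y_def)
  have M: "M / 2 = y + 1/2" "(M + 1) / 2 = y + 1" by (simp_all add: y_def field_simps)
  have "y * Gamma (y + 1/2) ^ 2 \<le> y * (y * Gamma y ^ 2)"
    by (rule mult_left_mono[OF Gamma_plus_half_sq_le[OF y]]) (use y in simp)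
  also have "\<dots> = Gamma (y + 1) ^ 2"
    by (simp add: Gamma_plus1_real[OF y] power2_eq_square)
  finally have "y * Gamma (M / 2) ^ 2 \<le> Gamma ((M + 1) / 2) ^ 2"
    by (simp only: M)
  moreover have "Gamma (M / 2) > 0" "Gamma ((M + 1) / 2) > 0"
    using assms by simp_all
  ultimately have "ln (y * Gamma (M / 2) ^ 2) \<le> ln (Gamma ((M + 1) / 2) ^ 2)"
    using y by simp
  then have "ln y + 2 * ln (Gamma (M / 2)) \<le> 2 * ln (Gamma ((M + 1) / 2))"
    using y \<open>Gamma (M / 2) > 0\<close> \<open>Gamma ((M + 1) / 2) > 0\<close> by (simp add: ln_mult ln_realpow)
  then show ?thesis
    by (simp add: log_Gamma_gap_def y_def)
qed

definition xlnx_midpoint_gap :: "real \<Rightarrow> real" where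
  "xlnx_midpoint_gap M = ((M + 1) * ln (M + 1) + (M - 1) * ln (M - 1)) / 2 - M * ln M"

lemma xlnx_midpoint_gap_nonneg:
  fixes M :: real
  assumes "M > 1"
  shows "0 \<le> xlnx_midpoint_gap M"
proof -
  let ?g = "\<lambda>u. (M + u) * ln (M + u) + (M - u) * ln (M - u)"
  have "?g 0 \<le> ?g 1"
  proof (rule DERIV_nonneg_imp_nondecreasing[of 0 1])
    fix u :: real
    assume u: "0 \<le> u" "u \<le> 1"
    then have pos: "M + u > 0" "M - u > 0" using assms by auto
    then have "DERIV ?g u :> ln (M + u) - ln (M - u)"
      by (auto intro!: derivative_eq_intros)
    moreover have "ln (M - u) \<le> ln (M + u)" using pos u by simp
    ultimately show "\<exists>d. DERIV ?g u :> d \<and> 0 \<le> d" by force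
  qed simp
  then show ?thesis
    by (simp add: xlnx_midpoint_gap_def field_simps)
qed

text \<open>For a natural number \<open>m \<ge> 2\<close>, \<open>middle_defect m = ln (V(2m, m-1) / V(2m, m))\<close>.\<close>

definition middle_defect :: "real \<Rightarrow> real" where
  "middle_defect M = log_Gamma_gap M - ln (M / 2) + xlnx_midpoint_gap M"

definition defect_drop :: "real \<Rightarrow> real" where
  "defect_drop x = (x - 1) * ln (x - 1) / 2 - x * ln x + (x + 2) * ln (x + 2) - (x + 3) * ln (x + 3) / 2
                   - 2 * ln (x + 1) + ln x + ln (x + 2)"

definition defect_drop_deriv :: "real \<Rightarrow> real" where
  "defect_drop_deriv x = (ln (x - 1) - 2 * ln x + 2 * ln (x + 2) - ln (x + 3)) / 2
                         - 2 / (x + 1) + 1 / x + 1 / (x + 2)"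

definition defect_drop_deriv2 :: "real \<Rightarrow> real" where
  "defect_drop_deriv2 x = (2 / (x - 1) - 4 / x + 4 / (x + 2) - 2 / (x + 3)) / 4
                          + 2 / ((x + 1) * (x + 1)) - 1 / (x * x) - 1 / ((x + 2) * (x + 2))"

lemma has_real_derivative_defect_drop:
  "x > 1 \<Longrightarrow> (defect_drop has_real_derivative defect_drop_deriv x) (at x)"
  unfolding defect_drop_def defect_drop_deriv_def
  apply (rule derivative_eq_intros refl | simp)+
  apply (simp add: field_simps)
  done

lemma has_real_derivative_defect_drop_deriv:
  "x > 1 \<Longrightarrow> (defect_drop_deriv has_real_derivative defect_drop_deriv2 x) (at x)"
  unfolding defect_drop_deriv_def defect_drop_deriv2_def
  by (rule derivative_eq_intros refl | simp)+

lemma middle_defect_add_two: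
  fixes M :: real
  assumes "M > 1"
  shows "middle_defect (M + 2) = middle_defect M - defect_drop M"
proof -
  have "ln ((M + 2) / 2) = ln (M + 2) - ln 2"
    by (rule ln_divide_pos) (use assms in simp_all)
  moreover have "ln (M / 2) = ln M - ln 2"
    by (rule ln_divide_pos) (use assms in simp_all)
  ultimately show ?thesis
    unfolding middle_defect_def log_Gamma_gap_add_two[OF order.strict_trans[OF zero_less_one assms]]
    by (simp add: defect_drop_def xlnx_midpoint_gap_def algebra_simps add_divide_distrib diff_divide_distrib)
qed

lemma defect_drop_deriv2_pos:
  fixes x :: real
  assumes "x > 1"
  shows "defect_drop_deriv2 x > 0"
proof -
  define a b c d e where "a = 1 / (x - 1)" and "b = 1 / x" and "c = 1 / (x + 1)"
    and "d = 1 / (x + 2)" and "e = 1 / (x + 3)"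
  have inv: "a * (x - 1) = 1" "b * x = 1" "c * (x + 1) = 1" "d * (x + 2) = 1" "e * (x + 3) = 1"
    using assms by (auto simp: a_def b_def c_def d_def e_def)
  have "defect_drop_deriv2 x = (2 * a - 4 * b + 4 * d - 2 * e) / 4 + 2 * (c * c) - b * b - d * d"
    unfolding defect_drop_deriv2_def a_def b_def c_def d_def e_def by simp
  with inv have eq: "defect_drop_deriv2 x * (2 * x\<^sup>2 * (x - 1) * (x + 1)\<^sup>2 * (x + 2)\<^sup>2 * (x + 3))
                   = 40 * x\<^sup>2 + 80 * x + 24"
    by algebra
  have "0 < 40 * x\<^sup>2 + 80 * x + 24"
    using assms by (simp add: add_pos_pos)
  then have "0 < defect_drop_deriv2 x * (2 * x\<^sup>2 * (x - 1) * (x + 1)\<^sup>2 * (x + 2)\<^sup>2 * (x + 3))"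
    unfolding eq .
  moreover have "0 < 2 * x\<^sup>2 * (x - 1) * (x + 1)\<^sup>2 * (x + 2)\<^sup>2 * (x + 3)"
    using assms by simp
  ultimately show ?thesis
    by (rule zero_less_mult_pos2)
qed

lemma defect_drop_deriv_nonpos:
  fixes x :: real
  assumes "x > 1"
  shows "defect_drop_deriv x \<le> 0"
proof -
  have "0 \<le> - defect_drop_deriv x"
  proof (rule nonneg_if_deriv_nonpos_tendsto_0[where a = 1 and x = x
        and f = "\<lambda>t. - defect_drop_deriv t" and f' = "\<lambda>t. - defect_drop_deriv2 t"])
    show "((\<lambda>t. - defect_drop_deriv t) \<longlongrightarrow> 0) at_top"
      unfolding defect_drop_deriv_def by real_asymp
    show "((\<lambda>t. - defect_drop_deriv t) has_real_derivative - defect_drop_deriv2 t) (at t)"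
      if "1 < t" for t
      using has_real_derivative_defect_drop_deriv[OF that] by (rule DERIV_minus)
    show "- defect_drop_deriv2 t \<le> 0" if "1 < t" for t
      using defect_drop_deriv2_pos[OF that] by simp
  qed (use assms in simp)
  then show ?thesis by simp
qed

lemma defect_drop_nonneg:
  fixes x :: real
  assumes "x > 1"
  shows "0 \<le> defect_drop x"
proof (rule nonneg_if_deriv_nonpos_tendsto_0[where a = 1 and x = x and f = defect_drop
      and f' = defect_drop_deriv])
  show "(defect_drop \<longlongrightarrow> 0) at_top"
    unfolding defect_drop_def by real_asymp
qed (use assms has_real_derivative_defect_drop defect_drop_deriv_nonpos in auto)

lemma middle_defect_add_even_le:
  fixes M :: real
  assumes "M > 1"
  shows "middle_defect (M + 2 * real k) \<le> middle_defect M"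
proof (induction k)
  case (Suc k)
  have "middle_defect (M + 2 * real (Suc k)) = middle_defect (M + 2 * real k) - defect_drop (M + 2 * real k)"
    using middle_defect_add_two[of "M + 2 * real k"] assms by (simp add: algebra_simps)
  also have "\<dots> \<le> middle_defect (M + 2 * real k)"
    using defect_drop_nonneg[of "M + 2 * real k"] assms by simp
  finally show ?case using Suc.IH by simp
qed simp

lemma middle_defect_ge:
  fixes M :: real
  assumes "M > 1"
  shows "- 1 / (M - 1) \<le> middle_defect M"
proof -
  have "ln (M / (M - 1)) \<le> M / (M - 1) - 1"
    by (rule ln_le_minus_one) (use assms in simp)
  moreover have "M / (M - 1) - 1 = 1 / (M - 1)"
    using assms by (simp add: field_simps)
  moreover have "ln ((M - 1) / 2) - ln (M / 2) = - ln (M / (M - 1))"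
    using assms by (simp add: ln_div)
  ultimately show ?thesis
    using log_Gamma_gap_ge[OF assms] xlnx_midpoint_gap_nonneg[OF assms]
    unfolding middle_defect_def by linarith
qed

lemma middle_defect_nonneg:
  fixes M :: real
  assumes "M > 1"
  shows "0 \<le> middle_defect M"
proof (rule LIMSEQ_le_const2)
  show "(\<lambda>k. - 1 / (M + 2 * real k - 1)) \<longlonglongrightarrow> 0"
    by real_asymp
  show "\<exists>N. \<forall>k\<ge>N. - 1 / (M + 2 * real k - 1) \<le> middle_defect M"
  proof (intro exI[of _ 0] allI impI)
    fix k :: nat
    have "- 1 / (M + 2 * real k - 1) \<le> middle_defect (M + 2 * real k)"
      by (rule middle_defect_ge) (use assms in simp)
    also have "\<dots> \<le> middle_defect M"
      by (rule middle_defect_add_even_le[OF assms])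
    finally show "- 1 / (M + 2 * real k - 1) \<le> middle_defect M" .
  qed
qed

lemma Gamma_half_ratio_pow4_le:
  fixes m :: nat
  assumes "2 \<le> m"
  shows "(Gamma (real m / 2) / Gamma ((real m + 1) / 2)) ^ 4 * real m ^ (2 * m + 2)
           \<le> 4 * real (m - 1) ^ (m - 1) * real (m + 1) ^ (m + 1)"
    (is "?L \<le> ?R")
proof -
  define x where "x = real m"
  have x: "x \<ge> 2" "real (m - 1) = x - 1" "real (m + 1) = x + 1" using assms by (simp_all add: x_def)
  have pos: "Gamma (x / 2) > 0" "Gamma ((x + 1) / 2) > 0" using x by simp_all
  then have "Gamma (x / 2) \<noteq> 0" "Gamma ((x + 1) / 2) \<noteq> 0" by simp_all
  have "ln ?L = 4 * (ln (Gamma (x / 2)) - ln (Gamma ((x + 1) / 2))) + (2 * x + 2) * ln x"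
    using pos x \<open>Gamma (x / 2) \<noteq> 0\<close> \<open>Gamma ((x + 1) / 2) \<noteq> 0\<close>
    by (simp add: x_def[symmetric] ln_mult ln_div ln_realpow ring_distribs)
  moreover have "ln ?R = 2 * ln 2 + (x - 1) * ln (x - 1) + (x + 1) * ln (x + 1)"
  proof -
    have pos: "real (m - 1) > 0" "real (m + 1) > 0" using assms by simp_all
    then have "ln ?R = ln 4 + ln (real (m - 1) ^ (m - 1)) + ln (real (m + 1) ^ (m + 1))"
      by (simp add: ln_mult_pos)
    also have "\<dots> = 2 * ln 2 + (x - 1) * ln (x - 1) + (x + 1) * ln (x + 1)"
    proof -
      have "ln (4::real) = 2 * ln 2" using ln_realpow[of 2 2] by simp
      then show ?thesis unfolding ln_realpow x(2,3) by simp
    qed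
    finally show ?thesis .
  qed
  moreover have "ln (x / 2) = ln x - ln 2" using x by (simp add: ln_div)
  ultimately have "ln ?R - ln ?L = 2 * middle_defect x"
    unfolding middle_defect_def log_Gamma_gap_def xlnx_midpoint_gap_def
    by (simp add: algebra_simps add_divide_distrib diff_divide_distrib)
  then have "ln ?L \<le> ln ?R"
    using middle_defect_nonneg[of x] x by simp
  moreover have "?L > 0"
    using pos assms unfolding x_def by (intro mult_pos_pos zero_less_power divide_pos_pos) simp_all
  moreover have "?R > 0" using assms by simp
  ultimately show ?thesis
    by simp
qed

lemma unit_sphere_vol_pow4_le:
  fixes m :: nat
  assumes "2 \<le> m"
  shows "unit_sphere_vol m ^ 4 * real m ^ (2 * m)
           \<le> (unit_sphere_vol (m - 1) * unit_sphere_vol (m + 1)) ^ 2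
              * real (m - 1) ^ (m - 1) * real (m + 1) ^ (m + 1)"
proof -
  define r where "r = Gamma (real m / 2) / Gamma ((real m + 1) / 2)"
  define V where "V = unit_sphere_vol (m - 1)"
  have "Suc (m - 1) = m" "real (m - 1 + 1) = real m" "real (m - 1 + 2) = real m + 1"
    using assms by auto
  then have Um: "unit_sphere_vol m = sqrt pi * r * V"
    using unit_sphere_vol_Suc[of "m - 1"] by (simp add: r_def V_def add.commute)
  have "Suc (Suc (m - 1)) = m + 1" using assms by simp
  then have Um1: "unit_sphere_vol (m + 1) = 2 * pi * V / real m"
    using unit_sphere_vol_Suc_Suc[of "m - 1"] assms by (simp add: V_def of_nat_diff)
  have m: "real m > 0" using assms by simp
  have sqrt_pi: "sqrt pi ^ 4 = pi ^ 2" using power_mult[of "sqrt pi" 2 2] by simp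
  have "unit_sphere_vol m ^ 4 * real m ^ (2 * m) = pi ^ 2 * V ^ 4 / real m ^ 2 * (r ^ 4 * real m ^ (2 * m + 2))"
    unfolding Um using m by (simp add: field_simps power_mult_distrib power_add sqrt_pi power2_eq_square)
  also have "\<dots> \<le> pi ^ 2 * V ^ 4 / real m ^ 2 * (4 * real (m - 1) ^ (m - 1) * real (m + 1) ^ (m + 1))"
    by (rule mult_left_mono) (use Gamma_half_ratio_pow4_le[OF assms] in \<open>simp_all add: r_def\<close>)
  also have "\<dots> = (unit_sphere_vol (m - 1) * unit_sphere_vol (m + 1)) ^ 2
                    * real (m - 1) ^ (m - 1) * real (m + 1) ^ (m + 1)"
    unfolding Um1 V_def[symmetric] using m by (simp add: field_simps power_mult_distrib)
  finally show ?thesis .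
qed

section \<open>Volumes of Clifford hypersurfaces\<close>

definition clifford_vol :: "nat \<Rightarrow> nat \<Rightarrow> real" where
  "clifford_vol n p = sphere_prod_vol p (sqrt (real p / real n)) (n - p) (sqrt (real (n - p) / real n))"

lemma clifford_vol_nonneg: "clifford_vol n p \<ge> 0"
  unfolding clifford_vol_def sphere_prod_vol_def sphere_vol_def
  using unit_sphere_vol_pos[of p] unit_sphere_vol_pos[of "n - p"] by simp

lemma clifford_vol_sym: "p \<le> n \<Longrightarrow> clifford_vol n (n - p) = clifford_vol n p"
  unfolding clifford_vol_def sphere_prod_vol_def by simp

lemma clifford_vol_0: "clifford_vol n 0 = 2 * unit_sphere_vol n"
  by (cases "n = 0") (simp_all add: clifford_vol_def sphere_prod_vol_def sphere_vol_def unit_sphere_vol_0)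

lemma clifford_vol_sq:
  assumes "p \<le> n"
  shows "clifford_vol n p ^ 2
           = (unit_sphere_vol p * unit_sphere_vol (n - p)) ^ 2 * real p ^ p * real (n - p) ^ (n - p) / real n ^ n"
proof -
  have sqrt_pow: "(sqrt a ^ k) ^ 2 = a ^ k" if "0 \<le> a" for a :: real and k :: nat
    using that by (metis power_mult mult.commute real_sqrt_pow2)
  have "clifford_vol n p ^ 2 = unit_sphere_vol p ^ 2 * unit_sphere_vol (n - p) ^ 2
          * (real p / real n) ^ p * (real (n - p) / real n) ^ (n - p)"
    unfolding clifford_vol_def sphere_prod_vol_def sphere_vol_def
    by (simp add: power_mult_distrib sqrt_pow)
  also have "real n ^ p * real n ^ (n - p) = real n ^ n"
    using assms by (simp flip: power_add)
  then have "unit_sphere_vol p ^ 2 * unit_sphere_vol (n - p) ^ 2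
          * (real p / real n) ^ p * (real (n - p) / real n) ^ (n - p)
        = (unit_sphere_vol p * unit_sphere_vol (n - p)) ^ 2 * real p ^ p * real (n - p) ^ (n - p) / real n ^ n"
    by (simp add: power_mult_distrib power_divide)
  finally show ?thesis .
qed

lemma clifford_vol_sq_step:
  assumes "n = p + k + 2"
  shows "clifford_vol n (p + 2) ^ 2 * step_factor k = clifford_vol n p ^ 2 * step_factor p"
proof -
  have "p + 2 \<le> n" "n - (p + 2) = k" "p \<le> n" "n - p = k + 2" using assms by simp_all
  note sq = clifford_vol_sq[OF \<open>p + 2 \<le> n\<close>, unfolded \<open>n - (p + 2) = k\<close>]
            clifford_vol_sq[OF \<open>p \<le> n\<close>, unfolded \<open>n - p = k + 2\<close>]
  have U: "unit_sphere_vol (p + 2) = 2 * pi * unit_sphere_vol p / real (p + 1)"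
          "unit_sphere_vol (k + 2) = 2 * pi * unit_sphere_vol k / real (k + 1)"
    using unit_sphere_vol_Suc_Suc by simp_all
  define P K where "P = real (p + 2) ^ (p + 2)" and "K = real (k + 2) ^ (k + 2)"
  define C where "C = (2 * pi * unit_sphere_vol p * unit_sphere_vol k) ^ 2 * P * K
                        / (real n ^ n * real (p + 1) ^ 2 * real (k + 1) ^ 2)"
  have "real n ^ n \<noteq> 0" using assms by simp
  have "clifford_vol n (p + 2) ^ 2 * step_factor k = C"
    unfolding sq U step_factor_def P_def[symmetric] K_def[symmetric] C_def
    using of_nat_self_power_pos[of k] \<open>real n ^ n \<noteq> 0\<close> by (simp add: field_simps power_mult_distrib)
  moreover have "clifford_vol n p ^ 2 * step_factor p = C"
    unfolding sq U step_factor_def P_def[symmetric] K_def[symmetric] C_def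
    using of_nat_self_power_pos[of p] \<open>real n ^ n \<noteq> 0\<close> by (simp add: field_simps power_mult_distrib)
  ultimately show ?thesis by simp
qed

lemma clifford_vol_step_le:
  assumes "p + 2 \<le> n - p"
  shows "clifford_vol n (p + 2) \<le> clifford_vol n p"
proof -
  define k where "k = n - p - 2"
  have n: "n = p + k + 2" and "p \<le> k" using assms by (simp_all add: k_def)
  have "clifford_vol n (p + 2) ^ 2 * step_factor k \<le> clifford_vol n p ^ 2 * step_factor k"
    unfolding clifford_vol_sq_step[OF n]
    by (rule mult_left_mono[OF step_factor_mono[OF \<open>p \<le> k\<close>]]) simp
  then have "clifford_vol n (p + 2) ^ 2 \<le> clifford_vol n p ^ 2"
    using step_factor_pos[of k] by simp
  then show ?thesis
    using clifford_vol_nonneg by (rule power2_le_imp_le)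
qed

lemma clifford_vol_2_less_0:
  assumes "3 \<le> n"
  shows "clifford_vol n 2 < clifford_vol n 0"
proof -
  define k where "k = n - 2"
  have n: "n = 0 + k + 2" and "0 < k" using assms by (simp_all add: k_def)
  have "clifford_vol n 0 ^ 2 > 0"
    using unit_sphere_vol_pos[of n] by (simp add: clifford_vol_0)
  then have "clifford_vol n 0 ^ 2 * step_factor 0 < clifford_vol n 0 ^ 2 * step_factor k"
    by (rule mult_strict_left_mono[OF step_factor_0_less[OF \<open>0 < k\<close>]])
  then have "clifford_vol n 2 ^ 2 * step_factor k < clifford_vol n 0 ^ 2 * step_factor k"
    unfolding clifford_vol_sq_step[OF n, unfolded add_0_left] .
  then have "clifford_vol n 2 ^ 2 < clifford_vol n 0 ^ 2"
    using step_factor_pos[of k] by simp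
  then show ?thesis
    using clifford_vol_nonneg by (rule power2_less_imp_less)
qed

lemma clifford_vol_antimono:
  "p + 2 * k \<le> n - (p + 2 * k) \<Longrightarrow> clifford_vol n (p + 2 * k) \<le> clifford_vol n p"
proof (induction k)
  case (Suc k)
  have "clifford_vol n (p + 2 * Suc k) = clifford_vol n (p + 2 * k + 2)"
    by simp
  also have "\<dots> \<le> clifford_vol n (p + 2 * k)"
    by (rule clifford_vol_step_le) (use Suc.prems in simp)
  also have "\<dots> \<le> clifford_vol n p"
    by (rule Suc.IH) (use Suc.prems in simp)
  finally show ?case .
qed simp

lemma two_pow_le_Suc_pow:
  assumes "1 \<le> d"
  shows "2 * real d ^ d \<le> real (d + 1) ^ d"
proof -
  have "0 \<le> 1 / real d" by simp
  then have "1 + real d * (1 / real d) \<le> (1 + 1 / real d) ^ d"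
    by (intro Bernoulli_inequality) linarith
  then have "2 \<le> (real (d + 1) / real d) ^ d"
    using assms by (simp add: field_simps)
  then show ?thesis
    using assms by (simp add: power_divide field_simps)
qed

lemma clifford_vol_1_less:
  assumes "2 \<le> n"
  shows "clifford_vol n 1 < 2 * unit_sphere_vol n"
proof -
  define d where "d = n - 1"
  have n: "n = d + 1" and "1 \<le> d" using assms by (simp_all add: d_def)
  let ?U = unit_sphere_vol
  have "1 \<le> n" "n - 1 = d" using n by simp_all
  have "clifford_vol n 1 ^ 2 = (2 * pi * ?U d) ^ 2 * real 1 ^ 1 * real d ^ d / real n ^ n"
    unfolding clifford_vol_sq[OF \<open>1 \<le> n\<close>, unfolded \<open>n - 1 = d\<close>] unit_sphere_vol_1 ..
  also have "\<dots> = 2 * pi * (2 * pi * ?U d ^ 2) * real d ^ d / (real (d + 1) * real (d + 1) ^ d)"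
    unfolding n by (simp add: power_mult_distrib power2_eq_square mult_ac)
  also have "\<dots> \<le> 2 * pi * (real (d + 1) * ?U (d + 1) ^ 2) * real d ^ d / (real (d + 1) * real (d + 1) ^ d)"
    using unit_sphere_vol_sq_le[of d] by (intro divide_right_mono mult_right_mono mult_left_mono) auto
  also have "\<dots> = pi * ?U (d + 1) ^ 2 * (2 * real d ^ d / real (d + 1) ^ d)"
  proof -
    \<comment> \<open>stated for an abstract \<open>r\<close>: the simplifier would otherwise expand \<open>real (d + 1)\<close>\<close>
    have "2 * pi * (r * u) * e / (r * b) = pi * u * (2 * e / b)" if "r > 0" for r u e b :: real
      using that by simp
    then show ?thesis by simp
  qed
  also have "\<dots> \<le> pi * ?U (d + 1) ^ 2"
  proof (rule mult_left_le)
    show "2 * real d ^ d / real (d + 1) ^ d \<le> 1"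
      using two_pow_le_Suc_pow[OF \<open>1 \<le> d\<close>] by (simp add: pos_divide_le_eq)
  qed simp
  also have "\<dots> < (2 * ?U (d + 1)) ^ 2"
  proof -
    have "0 < ?U (d + 1) ^ 2" using unit_sphere_vol_pos[of "d + 1"] by simp
    then have "pi * ?U (d + 1) ^ 2 < 4 * ?U (d + 1) ^ 2"
      by (rule mult_strict_right_mono[OF pi_less_4])
    then show ?thesis by (simp add: power_mult_distrib)
  qed
  finally have "clifford_vol n 1 ^ 2 < (2 * ?U (d + 1)) ^ 2" .
  moreover have "0 \<le> 2 * ?U (d + 1)" using unit_sphere_vol_pos[of "d + 1"] by simp
  ultimately have "clifford_vol n 1 < 2 * ?U (d + 1)" by (rule power2_less_imp_less)
  then show ?thesis using n by simp
qed

lemma clifford_vol_middle_le: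
  assumes "2 \<le> m"
  shows "clifford_vol (2 * m) m \<le> clifford_vol (2 * m) (m - 1)"
proof -
  have "m \<le> 2 * m" "2 * m - m = m" "m - 1 \<le> 2 * m" "2 * m - (m - 1) = m + 1" using assms by simp_all
  have "(unit_sphere_vol m * unit_sphere_vol m) ^ 2 * real m ^ m * real m ^ m
          = unit_sphere_vol m ^ 4 * real m ^ (2 * m)"
    by (simp add: mult_2 power_add eval_nat_numeral mult_ac)
  then have "(unit_sphere_vol m * unit_sphere_vol m) ^ 2 * real m ^ m * real m ^ m
          \<le> (unit_sphere_vol (m - 1) * unit_sphere_vol (m + 1)) ^ 2
              * real (m - 1) ^ (m - 1) * real (m + 1) ^ (m + 1)"
    using unit_sphere_vol_pow4_le[OF assms] by simp
  then have "clifford_vol (2 * m) m ^ 2 \<le> clifford_vol (2 * m) (m - 1) ^ 2"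
    unfolding clifford_vol_sq[OF \<open>m \<le> 2 * m\<close>, unfolded \<open>2 * m - m = m\<close>]
      clifford_vol_sq[OF \<open>m - 1 \<le> 2 * m\<close>, unfolded \<open>2 * m - (m - 1) = m + 1\<close>]
    by (rule divide_right_mono) simp
  then show ?thesis
    using clifford_vol_nonneg by (rule power2_le_imp_le)
qed

lemma clifford_vol_less_two_sphere:
  assumes "1 \<le> p" "p \<le> n - p"
  shows "clifford_vol n p < 2 * unit_sphere_vol n"
proof (cases "even p")
  case True
  then have "\<exists>k. p = 2 + 2 * k" using assms(1) by presburger
  then obtain k where p: "p = 2 + 2 * k" ..
  have "clifford_vol n p \<le> clifford_vol n 2"
    using clifford_vol_antimono[of 2 k n] assms p by simp
  also have "\<dots> < clifford_vol n 0"
    by (rule clifford_vol_2_less_0) (use assms p in simp)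
  finally show ?thesis
    by (simp add: clifford_vol_0)
next
  case False
  then have "\<exists>k. p = 1 + 2 * k" by presburger
  then obtain k where p: "p = 1 + 2 * k" ..
  have "clifford_vol n p \<le> clifford_vol n 1"
    using clifford_vol_antimono[of 1 k n] assms p by simp
  also have "\<dots> < 2 * unit_sphere_vol n"
    by (rule clifford_vol_1_less) (use assms in simp)
  finally show ?thesis .
qed

lemma clifford_vol_half_le:
  assumes "1 \<le> p" "p \<le> n - p"
  shows "clifford_vol n (n div 2) \<le> clifford_vol n p"
proof -
  define h where "h = n div 2"
  define j where "j = p + 2 * ((h - p) div 2)"
  have n: "n = 2 * h \<or> n = 2 * h + 1" unfolding h_def by presburger
  have "h - p = 2 * ((h - p) div 2) \<or> h - p = 2 * ((h - p) div 2) + 1" by presburger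
  moreover have "p \<le> h" using assms n by linarith
  ultimately have j: "j = h \<or> j + 1 = h" unfolding j_def by linarith
  have j_le: "clifford_vol n j \<le> clifford_vol n p"
    unfolding j_def by (rule clifford_vol_antimono) (use n j in \<open>auto simp: j_def\<close>)
  have "clifford_vol n (j + 1) \<le> clifford_vol n j" if "j + 1 = h"
    using n
  proof
    assume "n = 2 * h"
    with that have "n = 2 * (j + 1)" by simp
    moreover have "2 \<le> j + 1" using assms(1) by (simp add: j_def)
    ultimately show ?thesis
      using clifford_vol_middle_le[of "j + 1"] by simp
  next
    assume "n = 2 * h + 1"
    with that have n: "n = j + 1 + (j + 2)" by simp
    have "clifford_vol n (j + 1) = clifford_vol n (j + 2)"
      using clifford_vol_sym[of "j + 1" n] n by simp
    also have "\<dots> \<le> clifford_vol n j"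
      by (rule clifford_vol_step_le) (use n in simp)
    finally show ?thesis .
  qed
  then show ?thesis
    using j j_le unfolding h_def[symmetric] by auto
qed

lemma nat_floor_half: "nat \<lfloor>real n / 2\<rfloor> = n div 2"
  using floor_divide_of_nat_eq[of n 2, where 'a = real] by simp

lemma nat_ceiling_half: "nat \<lceil>real n / 2\<rceil> = n - n div 2"
proof -
  have "\<lceil>real n / 2\<rceil> = - (- int n div 2)"
    using ceiling_divide_eq_div[of "int n" 2] by simp
  then show ?thesis
    by simp
qed

theorem mainTheorem13:
  fixes n p :: nat
  assumes "n \<ge> 2" and "1 \<le> p" and "p \<le> n - 1"
  shows "2 * unit_sphere_vol n >
           sphere_prod_vol p (sqrt (real p / real n)) (n - p) (sqrt (real (n - p) / real n))
       \<and> sphere_prod_vol p (sqrt (real p / real n)) (n - p) (sqrt (real (n - p) / real n))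
           \<ge> sphere_prod_vol (nat \<lfloor>real n / 2\<rfloor>) (sqrt (real (nat \<lfloor>real n / 2\<rfloor>) / real n))
                             (nat \<lceil>real n / 2\<rceil>) (sqrt (real (nat \<lceil>real n / 2\<rceil>) / real n))"
proof -
  define q where "q = min p (n - p)"
  have "1 \<le> q" "q \<le> n - q"
    using assms by (auto simp: q_def)
  have "clifford_vol n p = clifford_vol n q"
    using clifford_vol_sym[of p n] assms by (cases "p \<le> n - p") (simp_all add: q_def)
  moreover have "clifford_vol n q < 2 * unit_sphere_vol n"
    using \<open>1 \<le> q\<close> \<open>q \<le> n - q\<close> by (rule clifford_vol_less_two_sphere)
  moreover have "clifford_vol n (n div 2) \<le> clifford_vol n q"
    using \<open>1 \<le> q\<close> \<open>q \<le> n - q\<close> by (rule clifford_vol_half_le)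
  ultimately show ?thesis
    unfolding nat_floor_half nat_ceiling_half clifford_vol_def[symmetric] by simp
qed

end
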